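(* Let $G$ be a noncyclic finite $p$-group and $N$ a nontrivial normal subgroup of $G$ such that $\eta(G) = \eta(G/N)$. Then: (i) for every normal subgroup $M$ of $G$, either $N \le M$ or $M \subseteq G^-$; (ii) if there exists a maximal cyclic subgroup $\langle x \rangle$ of $G$ that is normal in $G$, then $N \le \langle x \rangle$; in particular $N$ is cyclic.
   Context: A cyclic subgroup $C$ of a group $G$ is maximal cyclic if there is no cyclic subgroup $D$ of $G$ with $C < D$. $\eta(G)$ denotes the number of conjugacy classes of maximal cyclic subgroups of $G$. $G^- = \{ g \in G : \langle g \rangle \text{ is not maximal cyclic in } G\}$. *)

theory Defs
  imports "HOL-Algebra.Algebra"
begin

definition cyclic_subgroup :: "('a, 'b) monoid_scheme \<Rightarrow> 'a set \<Rightarrow> bool" where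
  "cyclic_subgroup G C \<longleftrightarrow> (\<exists>g \<in> carrier G. C = generate G {g})"

definition max_cyclic :: "('a, 'b) monoid_scheme \<Rightarrow> 'a set \<Rightarrow> bool" where
  "max_cyclic G C \<longleftrightarrow> cyclic_subgroup G C \<and> \<not> (\<exists>D. cyclic_subgroup G D \<and> C \<subset> D)"

definition conj_class :: "('a, 'b) monoid_scheme \<Rightarrow> 'a set \<Rightarrow> 'a set set" where
  "conj_class G C = {(\<lambda>h. g \<otimes>\<^bsub>G\<^esub> h \<otimes>\<^bsub>G\<^esub> inv\<^bsub>G\<^esub> g) ` C | g. g \<in> carrier G}"

definition eta :: "('a, 'b) monoid_scheme \<Rightarrow> nat" where
  "eta G = card {conj_class G C | C. max_cyclic G C}"

definition Gminus :: "('a, 'b) monoid_scheme \<Rightarrow> 'a set" where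
  "Gminus G = {g \<in> carrier G. \<not> max_cyclic G (generate G {g})}"

definition p_group :: "('a, 'b) monoid_scheme \<Rightarrow> nat \<Rightarrow> bool" where
  "p_group G p \<longleftrightarrow> group G \<and> finite (carrier G) \<and> Factorial_Ring.prime p \<and> (\<exists>n. order G = p ^ n)"

end

theory Submission
  imports Defs
begin

text \<open>Let h be a surjective homomorphism of a finite group G. Every maximal cyclic subgroup of the
  image is the image of a maximal cyclic subgroup of G (lift a generator and enlarge). So taking
  images maps some of the conjugacy classes of maximal cyclic subgroups of G onto all those of
  the image, and equality of the two counts makes this a bijection on all classes: images of
  maximal cyclic subgroups stay maximal cyclic, and maximal cyclic subgroups with equal images
  are conjugate. Now if x in a normal subgroup M generates a maximal cyclic subgroup and n is in
  the kernel, then any maximal cyclic subgroup containing x n has the same image as the one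
  generated by x, hence is conjugate to it and lies in M; so n is in M. Part (ii) is part (i)
  for the subgroup generated by x, together with the fact that subgroups of cyclic groups are
  cyclic.\<close>

abbreviation conjugate_by :: "('a, 'b) monoid_scheme \<Rightarrow> 'a \<Rightarrow> 'a \<Rightarrow> 'a" where
  "conjugate_by G a \<equiv> \<lambda>h. a \<otimes>\<^bsub>G\<^esub> h \<otimes>\<^bsub>G\<^esub> inv\<^bsub>G\<^esub> a"

definition max_cyclic_classes :: "('a, 'b) monoid_scheme \<Rightarrow> 'a set set set" where
  "max_cyclic_classes G = {conj_class G C | C. max_cyclic G C}"

lemma eta_eq_card_max_cyclic_classes: "eta G = card (max_cyclic_classes G)"
  unfolding eta_def max_cyclic_classes_def ..

lemma conj_class_eq_image: "conj_class G C = (\<lambda>a. conjugate_by G a ` C) ` carrier G"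
  unfolding conj_class_def by blast

lemma (in group) conj_class_self: "C \<subseteq> carrier G \<Longrightarrow> C \<in> conj_class G C"
  unfolding conj_class_eq_image by (rule image_eqI[of _ _ \<one>]) force+

lemma (in group) conj_class_subset_Pow: "C \<subseteq> carrier G \<Longrightarrow> conj_class G C \<subseteq> Pow (carrier G)"
  unfolding conj_class_eq_image by auto

lemma (in normal) conj_class_subset_normal:
  assumes "C \<subseteq> H" "D \<in> conj_class G C"
  shows "D \<subseteq> H"
  using assms inv_op_closed2 unfolding conj_class_eq_image by blast

lemma (in group) conjugate_by_iso: "a \<in> carrier G \<Longrightarrow> conjugate_by G a \<in> iso G G"
proof -
  assume a: "a \<in> carrier G"
  have "inj_on (conjugate_by G a) (carrier G)"
    using a by (intro inj_onI) simp
  moreover have "conjugate_by G a ` carrier G = carrier G"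
  proof (intro equalityI subsetI)
    fix x assume "x \<in> carrier G"
    then show "x \<in> conjugate_by G a ` carrier G"
      using a conjugation_is_surj[symmetric] by (intro image_eqI[of _ _ "inv a \<otimes> x \<otimes> a"]) auto
  qed (use a in auto)
  moreover have "inv a \<otimes> (a \<otimes> z) = z" if "z \<in> carrier G" for z
    using a that by (simp add: m_assoc[symmetric])
  ultimately show ?thesis
    using a by (auto simp: iso_def hom_def bij_betw_def m_assoc)
qed

lemma (in group) cyclic_subgroup_subset: "cyclic_subgroup G C \<Longrightarrow> C \<subseteq> carrier G"
  unfolding cyclic_subgroup_def using generate_incl by blast

lemma (in group_hom) generate_singleton_image:
  "x \<in> carrier G \<Longrightarrow> h ` generate G {x} = generate H {h x}"
  using generate_img[of "{x}"] by simp

lemma (in group_hom) cyclic_subgroup_image: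
  "cyclic_subgroup G C \<Longrightarrow> cyclic_subgroup H (h ` C)"
  unfolding cyclic_subgroup_def by (metis generate_singleton_image hom_closed)

lemma max_cyclic_iso_image:
  assumes "group G" "group H" "f \<in> iso G H" "max_cyclic G C"
  shows "max_cyclic H (f ` C)"
proof -
  interpret group_hom G H f
    using assms(1-3) by (simp add: group_hom_def group_hom_axioms_def iso_def)
  have bij: "bij_betw f (carrier G) (carrier H)" using assms(3) by (simp add: iso_def)
  obtain g where g: "g \<in> carrier G" "C = generate G {g}"
    using assms(4) unfolding max_cyclic_def cyclic_subgroup_def by blast
  have "\<not> f ` C \<subset> D" if "cyclic_subgroup H D" for D
  proof
    assume fC_D: "f ` C \<subset> D"
    obtain d where d: "d \<in> carrier H" "D = generate H {d}"
      using \<open>cyclic_subgroup H D\<close> unfolding cyclic_subgroup_def by blast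
    then obtain c where c: "c \<in> carrier G" "d = f c"
      using bij unfolding bij_betw_def by blast
    then have D_img: "D = f ` generate G {c}" using d(2) generate_singleton_image by simp
    have "C \<subset> generate G {c}"
      using fC_D D_img c(1) g bij G.generate_incl[of "{g}"] G.generate_incl[of "{c}"]
      unfolding bij_betw_def inj_on_def by blast
    moreover have "cyclic_subgroup G (generate G {c})"
      using c(1) unfolding cyclic_subgroup_def by blast
    ultimately show False using assms(4) unfolding max_cyclic_def by blast
  qed
  moreover have "cyclic_subgroup H (f ` C)"
    using assms(4) cyclic_subgroup_image unfolding max_cyclic_def by blast
  ultimately show ?thesis unfolding max_cyclic_def by blast
qed

lemma (in group) max_cyclic_conj_class:
  assumes "max_cyclic G C" "D \<in> conj_class G C"
  shows "max_cyclic G D"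
  using assms max_cyclic_iso_image[OF is_group is_group conjugate_by_iso]
  unfolding conj_class_eq_image by blast

lemma (in group) cyclic_subgroup_subset_max_cyclic:
  assumes "finite (carrier G)" "cyclic_subgroup G C"
  shows "\<exists>D. max_cyclic G D \<and> C \<subseteq> D"
proof -
  let ?S = "{D. cyclic_subgroup G D \<and> C \<subseteq> D}"
  have "finite ?S"
    using assms(1) cyclic_subgroup_subset by (auto intro: finite_subset[of _ "Pow (carrier G)"])
  then obtain D where "D \<in> ?S" "\<forall>D' \<in> ?S. D \<subseteq> D' \<longrightarrow> D = D'"
    using finite_has_maximal[of ?S] assms(2) by blast
  then show ?thesis unfolding max_cyclic_def by blast
qed

lemma bij_betw_if_card_eq_and_onto:
  assumes "finite A" "card A = card B" "B \<subseteq> f ` {a \<in> A. f a \<in> B}"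
  shows "bij_betw f A B"
proof -
  let ?A' = "{a \<in> A. f a \<in> B}"
  have img: "f ` ?A' = B" using assms(3) by blast
  have fin: "finite ?A'" using assms(1) by simp
  have "card B \<le> card ?A'" using card_image_le[OF fin, of f] img by simp
  moreover have "card ?A' \<le> card A" using assms(1) by (intro card_mono) auto
  ultimately have "?A' = A" "card (f ` ?A') = card ?A'"
    using card_subset_eq[OF assms(1), of ?A'] assms(2) img by auto
  then show ?thesis
    using eq_card_imp_inj_on[OF fin] img unfolding bij_betw_def by metis
qed

context group_hom
begin

lemma conj_class_image:
  assumes "h ` carrier G = carrier H" "C \<subseteq> carrier G"
  shows "(`) h ` conj_class G C = conj_class H (h ` C)"
proof -
  have "h (conjugate_by G a x) = conjugate_by H (h a) (h x)"
    if "a \<in> carrier G" "x \<in> carrier G" for a x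
    using that by simp
  then have "(`) h ` conj_class G C = (\<lambda>a. conjugate_by H (h a) ` h ` C) ` carrier G"
    unfolding conj_class_eq_image image_image using assms(2)
    by (intro image_cong) (auto simp: image_image subset_iff)
  also have "\<dots> = conj_class H (h ` C)"
    unfolding conj_class_eq_image assms(1)[symmetric] image_image ..
  finally show ?thesis .
qed

lemma max_cyclic_is_image_of_max_cyclic:
  assumes "finite (carrier G)" "h ` carrier G = carrier H" "max_cyclic H D"
  shows "\<exists>C. max_cyclic G C \<and> D = h ` C"
proof -
  obtain d where d: "d \<in> carrier H" "D = generate H {d}"
    using assms(3) unfolding max_cyclic_def cyclic_subgroup_def by blast
  then obtain y where y: "y \<in> carrier G" "d = h y"
    using assms(2) by blast
  then have D_img: "D = h ` generate G {y}" using d(2) generate_singleton_image by simp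
  obtain C where C: "max_cyclic G C" "generate G {y} \<subseteq> C"
    using G.cyclic_subgroup_subset_max_cyclic[OF assms(1)] y(1)
    unfolding cyclic_subgroup_def by blast
  have "cyclic_subgroup H (h ` C)"
    using C(1) cyclic_subgroup_image unfolding max_cyclic_def by blast
  moreover have "D \<subseteq> h ` C" using D_img C(2) by blast
  ultimately have "D = h ` C" using assms(3) unfolding max_cyclic_def by blast
  then show ?thesis using C(1) by blast
qed

lemma bij_betw_max_cyclic_classes:
  assumes fin: "finite (carrier G)" and surj: "h ` carrier G = carrier H"
    and eta: "eta G = eta H"
  shows "bij_betw ((`) ((`) h)) (max_cyclic_classes G) (max_cyclic_classes H)"
proof (rule bij_betw_if_card_eq_and_onto)
  have "max_cyclic_classes G \<subseteq> Pow (Pow (carrier G))"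
  proof
    fix K assume "K \<in> max_cyclic_classes G"
    then obtain C where "K = conj_class G C" "max_cyclic G C"
      unfolding max_cyclic_classes_def by blast
    then show "K \<in> Pow (Pow (carrier G))"
      using G.conj_class_subset_Pow G.cyclic_subgroup_subset unfolding max_cyclic_def by simp
  qed
  then show "finite (max_cyclic_classes G)"
    using fin by (simp add: finite_subset)
  show "card (max_cyclic_classes G) = card (max_cyclic_classes H)"
    using eta by (simp add: eta_eq_card_max_cyclic_classes)
  show "max_cyclic_classes H \<subseteq> (`) ((`) h) `
      {K \<in> max_cyclic_classes G. (`) ((`) h) K \<in> max_cyclic_classes H}"
  proof
    fix K assume K: "K \<in> max_cyclic_classes H"
    then obtain D where D: "K = conj_class H D" "max_cyclic H D"
      unfolding max_cyclic_classes_def by blast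
    then obtain C where C: "max_cyclic G C" "D = h ` C"
      using max_cyclic_is_image_of_max_cyclic[OF fin surj] by blast
    have "(`) ((`) h) (conj_class G C) = K"
      using conj_class_image[OF surj] C D G.cyclic_subgroup_subset
      unfolding max_cyclic_def by simp
    moreover have "conj_class G C \<in> max_cyclic_classes G"
      using C(1) unfolding max_cyclic_classes_def by blast
    ultimately show "K \<in> (`) ((`) h) `
        {K \<in> max_cyclic_classes G. (`) ((`) h) K \<in> max_cyclic_classes H}"
      using K by (intro image_eqI[of _ _ "conj_class G C"]) simp_all
  qed
qed

lemma eta_eq_max_cyclic_image:
  assumes "finite (carrier G)" "h ` carrier G = carrier H" "eta G = eta H" "max_cyclic G C"
  shows "max_cyclic H (h ` C)"
proof -
  have C: "C \<subseteq> carrier G"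
    using assms(4) G.cyclic_subgroup_subset unfolding max_cyclic_def by blast
  have "conj_class G C \<in> max_cyclic_classes G"
    using assms(4) unfolding max_cyclic_classes_def by blast
  then have "(`) ((`) h) (conj_class G C) \<in> max_cyclic_classes H"
    using bij_betw_apply[OF bij_betw_max_cyclic_classes[OF assms(1-3)]] by blast
  then obtain D where D: "conj_class H (h ` C) = conj_class H D" "max_cyclic H D"
    unfolding conj_class_image[OF assms(2) C] max_cyclic_classes_def by blast
  have "h ` C \<subseteq> carrier H" using C hom_closed by blast
  then have "h ` C \<in> conj_class H D" using H.conj_class_self D(1) by metis
  then show ?thesis using H.max_cyclic_conj_class[OF D(2)] by blast
qed

lemma eta_eq_image_eq_imp_conjugate:
  assumes "finite (carrier G)" "h ` carrier G = carrier H" "eta G = eta H"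
    and "max_cyclic G C" "max_cyclic G D" "h ` C = h ` D"
  shows "D \<in> conj_class G C"
proof -
  have CD: "C \<subseteq> carrier G" "D \<subseteq> carrier G"
    using assms(4,5) G.cyclic_subgroup_subset unfolding max_cyclic_def by blast+
  have "conj_class G C \<in> max_cyclic_classes G" "conj_class G D \<in> max_cyclic_classes G"
    using assms(4,5) unfolding max_cyclic_classes_def by blast+
  moreover have "(`) ((`) h) (conj_class G C) = (`) ((`) h) (conj_class G D)"
    using conj_class_image[OF assms(2)] CD assms(6) by simp
  ultimately have "conj_class G C = conj_class G D"
    using bij_betw_imp_inj_on[OF bij_betw_max_cyclic_classes[OF assms(1-3)]]
    by (blast dest: inj_onD)
  then show ?thesis using G.conj_class_self[OF CD(2)] by simp
qed

lemma eta_eq_kernel_le_normal_or_Gminus: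
  assumes "finite (carrier G)" "h ` carrier G = carrier H" "eta G = eta H" "M \<lhd> G"
  shows "kernel G H h \<subseteq> M \<or> M \<subseteq> Gminus G"
proof (rule disjCI)
  interpret M: normal M G by (rule assms(4))
  assume "\<not> M \<subseteq> Gminus G"
  then obtain x where x: "x \<in> M" "max_cyclic G (generate G {x})"
    using M.subset unfolding Gminus_def by blast
  have xG: "x \<in> carrier G" using x(1) M.subset by blast
  show "kernel G H h \<subseteq> M"
  proof
    fix n assume "n \<in> kernel G H h"
    then have n: "n \<in> carrier G" "h n = \<one>\<^bsub>H\<^esub>" unfolding kernel_def by auto
    define y where "y = x \<otimes> n"
    have y: "y \<in> carrier G" "h y = h x" using xG n unfolding y_def by auto
    obtain C where C: "max_cyclic G C" "generate G {y} \<subseteq> C"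
      using G.cyclic_subgroup_subset_max_cyclic[OF assms(1)] y(1) unfolding cyclic_subgroup_def by blast
    have "h ` generate G {x} \<subseteq> h ` C"
      using C(2) y generate_singleton_image xG by (metis image_mono)
    moreover have "cyclic_subgroup H (h ` C)"
      using C(1) cyclic_subgroup_image unfolding max_cyclic_def by blast
    ultimately have "h ` generate G {x} = h ` C"
      using eta_eq_max_cyclic_image[OF assms(1-3) x(2)] unfolding max_cyclic_def by blast
    then have "C \<in> conj_class G (generate G {x})"
      using eta_eq_image_eq_imp_conjugate[OF assms(1-3) x(2) C(1)] by blast
    moreover have "generate G {x} \<subseteq> M"
      using x(1) G.generate_subgroup_incl[OF _ M.subgroup_axioms] by blast
    ultimately have "y \<in> M"
      using M.conj_class_subset_normal C(2) generate.incl[of y "{y}"] by blast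
    then have "inv x \<otimes> y \<in> M" using x(1) by simp
    moreover have "inv x \<otimes> y = n" using xG n(1) unfolding y_def by (simp add: G.m_assoc[symmetric])
    ultimately show "n \<in> M" by simp
  qed
qed

end

lemma int_set_closed_diff_mult_has_dvd_generator:
  fixes I :: "int set"
  assumes "0 \<in> I" "\<And>a b q. a \<in> I \<Longrightarrow> b \<in> I \<Longrightarrow> a - b * q \<in> I"
  shows "\<exists>d \<in> I. \<forall>k \<in> I. d dvd k"
proof (cases "I \<subseteq> {0}")
  case True
  then show ?thesis using assms(1) by auto
next
  case False
  then obtain k where k: "k \<in> I" "k \<noteq> 0" by blast
  have "\<bar>k\<bar> \<in> I" using assms(2)[OF assms(1) k(1), of "- sgn k"] by (simp add: abs_sgn)
  then have ex: "\<exists>n::nat. 0 < n \<and> int n \<in> I" using k(2) by (intro exI[of _ "nat \<bar>k\<bar>"]) simp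
  define d where "d = (LEAST n::nat. 0 < n \<and> int n \<in> I)"
  have d: "0 < d" "int d \<in> I" using LeastI_ex[OF ex] unfolding d_def by blast+
  have "int d dvd j" if j: "j \<in> I" for j
  proof -
    define r where "r = j mod int d"
    have "r \<in> I"
      using assms(2)[OF j d(2), of "j div int d"] by (simp add: r_def minus_mult_div_eq_mod)
    moreover have "0 \<le> r" "r < int d" using d(1) by (simp_all add: r_def)
    moreover have "\<not> (0 < nat r \<and> int (nat r) \<in> I)" if "nat r < d"
      using not_less_Least[of "nat r" "\<lambda>n. 0 < n \<and> int n \<in> I"] that unfolding d_def by blast
    ultimately have "r = 0" by auto
    then show ?thesis by (simp add: r_def dvd_eq_mod_eq_0)
  qed
  then show ?thesis using d(2) by blast
qed

lemma (in group) subgroup_of_cyclic_is_cyclic: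
  assumes x: "x \<in> carrier G" and "subgroup K G" "K \<subseteq> generate G {x}"
  shows "cyclic_subgroup G K"
proof -
  interpret K: subgroup K G by fact
  let ?I = "{k::int. x [^] k \<in> K}"
  have "a - b * q \<in> ?I" if "a \<in> ?I" "b \<in> ?I" for a b q
    using that subgroup_int_pow_closed[OF assms(2)]
    by (simp add: x int_pow_diff int_pow_pow[symmetric])
  then obtain d where d: "x [^] d \<in> K" "\<forall>k \<in> ?I. d dvd k"
    using int_set_closed_diff_mult_has_dvd_generator[of ?I] by auto
  have "K \<subseteq> generate G {x [^] d}"
  proof
    fix v assume "v \<in> K"
    then obtain k where "v = x [^] k" "k \<in> ?I" using assms(3) generate_pow[OF x] by auto
    moreover obtain q where "k = d * q" using d(2) \<open>k \<in> ?I\<close> by blast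
    ultimately have "v = (x [^] d) [^] q" by (simp add: x int_pow_pow)
    then show "v \<in> generate G {x [^] d}" using generate_pow[of "x [^] d"] x by auto
  qed
  moreover have "generate G {x [^] d} \<subseteq> K"
    using d(1) generate_subgroup_incl[OF _ assms(2)] by blast
  ultimately show ?thesis unfolding cyclic_subgroup_def using x by blast
qed

theorem corollary4p6:
  fixes G :: "('a, 'b) monoid_scheme" and N :: "'a set" and p :: nat
  assumes "p_group G p"
    and "\<not> cyclic_subgroup G (carrier G)"
    and "N \<lhd> G"
    and "N \<noteq> {\<one>\<^bsub>G\<^esub>}"
    and "eta G = eta (G Mod N)"
  shows "(\<forall>M. M \<lhd> G \<longrightarrow> N \<subseteq> M \<or> M \<subseteq> Gminus G)
    \<and> (\<forall>x \<in> carrier G. max_cyclic G (generate G {x}) \<and> generate G {x} \<lhd> G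
          \<longrightarrow> N \<subseteq> generate G {x} \<and> cyclic_subgroup G N)"
proof -
  interpret group G using assms(1) unfolding p_group_def by blast
  interpret normal N G by fact
  interpret quot: group_hom G "G Mod N" "\<lambda>a. N #>\<^bsub>G\<^esub> a"
    by (simp add: group_hom_def group_hom_axioms_def is_group factorgroup_is_group r_coset_hom_Mod)
  have fin: "finite (carrier G)" using assms(1) unfolding p_group_def by blast
  have surj: "(\<lambda>a. N #>\<^bsub>G\<^esub> a) ` carrier G = carrier (G Mod N)"
    unfolding FactGroup_def RCOSETS_def by auto
  have "N \<subseteq> kernel G (G Mod N) (\<lambda>a. N #>\<^bsub>G\<^esub> a)"
    unfolding kernel_def using coset_join2[OF _ subgroup_axioms] subset by auto
  then have dichotomy: "N \<subseteq> M \<or> M \<subseteq> Gminus G" if "M \<lhd> G" for M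
    using quot.eta_eq_kernel_le_normal_or_Gminus[OF fin surj assms(5) that] by blast
  have "N \<subseteq> generate G {x}"
    if "x \<in> carrier G" "max_cyclic G (generate G {x})" "generate G {x} \<lhd> G" for x
    using dichotomy[OF that(3)] that generate.incl[of x "{x}" G] unfolding Gminus_def by blast
  then show ?thesis using dichotomy subgroup_of_cyclic_is_cyclic subgroup_axioms by blast
qed

end
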